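(* Let $V$ be as in the setup below, $V^+=\{v\in V:(N^+\otimes\mathbb C_q)\cdot v=0\}$, $h\in\dot{\mathfrak h}$ and $a\in\operatorname{rad}f$. If there exists $v\in V^+$ with $(h\otimes t^a)\cdot v\neq0$, then $(h\otimes t^a)\cdot w\neq0$ for all nonzero $w\in V^+$.
   Context: Fix integers $n\ge2$, $d\ge2$. Let $q=(q_{ij})_{1\le i,j\le n}$ with $q_{ij}\in\mathbb C^\times$ roots of unity, $q_{ii}=1$, $q_{ij}=q_{ji}^{-1}$. The rational quantum torus $\mathbb C_q$ is generated by $t_1^{\pm1},\dots,t_n^{\pm1}$ with $t_it_i^{-1}=t_i^{-1}t_i=1$, $t_it_j=q_{ij}t_jt_i$; $t^a=t_1^{a_1}\cdots t_n^{a_n}$, $t^at^b=f(a,b)t^bt^a$ with $f(a,b)=\prod_{i,j}q_{ji}^{a_jb_i}$, $\operatorname{rad}f=\{a: f(a,b)=1\ \forall b\}$; $Z(\mathbb C_q)$ is spanned by $t^a$, $a\in\operatorname{rad}f$. $\tau(d,q)=\mathfrak{sl}_d(\mathbb C_q)$: $d\times d$ matrices over $\mathbb C_q$ with trace in $[\mathbb C_q,\mathbb C_q]$, commutator bracket. With $J\subset\mathbb C_q\otimes\mathbb C_q$ spanned by $x\otimes y+y\otimes x$, $xy\otimes z+yz\otimes x+zx\otimes y$, let $\langle t^a,t^b\rangle$ ($a+b\in\operatorname{rad}f$) be the image of $t^a\otimes t^b$ modulo $J$, $HC_1(\mathbb C_q)$ their span; $\tilde\tau(d,q)=\tau(d,q)\oplus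 HC_1(\mathbb C_q)$ with $HC_1$ central and $[X\otimes t^a,Y\otimes t^b]=(XY\otimes t^at^b-YX\otimes t^bt^a)+\mathrm{Tr}(XY)\langle t^a,t^b\rangle$ if $a+b\in\operatorname{rad}f$ (no last term otherwise); $\hat\tau(d,q)=\tilde\tau(d,q)\oplus D$, $D=\bigoplus_i\mathbb Cd_i$, $[d_i,d_j]=0$, $[d_i,X\otimes t^a]=a_iX\otimes t^a$, $[d_i,\langle t^a,t^b\rangle]=(a_i+b_i)\langle t^a,t^b\rangle$. $\dot{\mathfrak h}$ = trace-zero diagonal matrices. Integrable: direct sum of weight spaces for $\mathfrak h=\dot{\mathfrak h}\oplus\bigoplus\mathbb C\langle t_i,t_i^{-1}\rangle\oplus\bigoplus\mathbb Cd_i$ and each $x_\alpha\otimes t^m$ ($x_\alpha$ a root vector of $\mathfrak{sl}_d(\mathbb C)$) acts locally nilpotently. Setup: $V$ is an irreducible integrable $\hat\tau(d,q)$-module with finite-dimensional weight spaces on which $HC_1(\mathbb C_q)$ acts trivially, regarded as a module over $(\mathfrak{gl}_d(\mathbb C)\otimes\mathbb C_q)\oplus D$ via $\mathfrak{gl}_d(\mathbb C)\otimes\mathbb C_q=\mathfrak{sl}_d(\mathbb C_q)\oplus(I_d\otimes Z(\mathbb C_q))$ with $I_d\otimes Z(\mathbb C_q)$ acting by zero. $N^+$ = strictly upper triangular matrices. *)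

theory Defs
  imports Complex_Main
begin

text \<open>Exponent vectors a in Z^n are functions nat => int vanishing outside {0..<n}
  (index i stands for t_(i+1)). An element of C_q is a finitely supported coefficient
  function on such exponents: x = sum_a x(a) t^a.\<close>

type_synonym lat = "nat \<Rightarrow> int"
type_synonym qt = "lat \<Rightarrow> complex"

definition lattice :: "nat \<Rightarrow> lat \<Rightarrow> bool" where
  "lattice n a \<longleftrightarrow> (\<forall>i. n \<le> i \<longrightarrow> a i = 0)"

definition qt_elem :: "nat \<Rightarrow> qt \<Rightarrow> bool" where
  "qt_elem n x \<longleftrightarrow> finite {a. x a \<noteq> 0} \<and> (\<forall>a. x a \<noteq> 0 \<longrightarrow> lattice n a)"

definition qparam :: "nat \<Rightarrow> (nat \<Rightarrow> nat \<Rightarrow> complex) \<Rightarrow> bool" where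
  "qparam n q \<longleftrightarrow> (\<forall>i<n. \<forall>j<n. (\<exists>k::nat. 0 < k \<and> q i j ^ k = 1)
      \<and> q i i = 1 \<and> q i j = inverse (q j i))"

text \<open>t^a t^b = sigma(a,b) t^(a+b), obtained by moving t_i^(b_i) to the left past
  t_j^(a_j) for j > i, using t_j t_i = q_ji t_i t_j.\<close>
definition sigma :: "nat \<Rightarrow> (nat \<Rightarrow> nat \<Rightarrow> complex) \<Rightarrow> lat \<Rightarrow> lat \<Rightarrow> complex" where
  "sigma n q a b = (\<Prod>i<n. \<Prod>j<n. if i < j then q j i powi (a j * b i) else 1)"

text \<open>f(a,b) with t^a t^b = f(a,b) t^b t^a.\<close>
definition fq :: "nat \<Rightarrow> (nat \<Rightarrow> nat \<Rightarrow> complex) \<Rightarrow> lat \<Rightarrow> lat \<Rightarrow> complex" where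
  "fq n q a b = (\<Prod>i<n. \<Prod>j<n. q j i powi (a j * b i))"

definition rad :: "nat \<Rightarrow> (nat \<Rightarrow> nat \<Rightarrow> complex) \<Rightarrow> lat set" where
  "rad n q = {a. lattice n a \<and> (\<forall>b. lattice n b \<longrightarrow> fq n q a b = 1)}"

definition qmult :: "nat \<Rightarrow> (nat \<Rightarrow> nat \<Rightarrow> complex) \<Rightarrow> qt \<Rightarrow> qt \<Rightarrow> qt" where
  "qmult n q x y = (\<lambda>c. \<Sum>a\<in>{a. x a \<noteq> 0}. x a * y (\<lambda>i. c i - a i) * sigma n q a (\<lambda>i. c i - a i))"

inductive_set comm_span :: "nat \<Rightarrow> (nat \<Rightarrow> nat \<Rightarrow> complex) \<Rightarrow> qt set"
  for n q where
  zero: "(\<lambda>_. 0) \<in> comm_span n q"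
| step: "u \<in> comm_span n q \<Longrightarrow> qt_elem n x \<Longrightarrow> qt_elem n y \<Longrightarrow>
     (\<lambda>a. u a + c * (qmult n q x y a - qmult n q y x a)) \<in> comm_span n q"

type_synonym qmat = "nat \<Rightarrow> nat \<Rightarrow> qt"

definition qmat_elem :: "nat \<Rightarrow> nat \<Rightarrow> qmat \<Rightarrow> bool" where
  "qmat_elem n d X \<longleftrightarrow> (\<forall>i j. (i < d \<and> j < d \<longrightarrow> qt_elem n (X i j))
                          \<and> (\<not> (i < d \<and> j < d) \<longrightarrow> X i j = (\<lambda>_. 0)))"

definition mmul :: "nat \<Rightarrow> (nat \<Rightarrow> nat \<Rightarrow> complex) \<Rightarrow> nat \<Rightarrow> qmat \<Rightarrow> qmat \<Rightarrow> qmat" where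
  "mmul n q d X Y = (\<lambda>i j c. \<Sum>k<d. qmult n q (X i k) (Y k j) c)"

definition mbr :: "nat \<Rightarrow> (nat \<Rightarrow> nat \<Rightarrow> complex) \<Rightarrow> nat \<Rightarrow> qmat \<Rightarrow> qmat \<Rightarrow> qmat" where
  "mbr n q d X Y = (\<lambda>i j c. mmul n q d X Y i j c - mmul n q d Y X i j c)"

definition madd :: "qmat \<Rightarrow> qmat \<Rightarrow> qmat" where
  "madd X Y = (\<lambda>i j c. X i j c + Y i j c)"

definition msc :: "complex \<Rightarrow> qmat \<Rightarrow> qmat" where
  "msc z X = (\<lambda>i j c. z * X i j c)"

definition mtrace :: "nat \<Rightarrow> qmat \<Rightarrow> qt" where
  "mtrace d X = (\<lambda>c. \<Sum>i<d. X i i c)"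

definition sl_q :: "nat \<Rightarrow> (nat \<Rightarrow> nat \<Rightarrow> complex) \<Rightarrow> nat \<Rightarrow> qmat set" where
  "sl_q n q d = {X. qmat_elem n d X \<and> mtrace d X \<in> comm_span n q}"

text \<open>Action of the degree derivation d_i on C_q-coefficients: t^a |-> a_i t^a.\<close>
definition mdeg :: "nat \<Rightarrow> qmat \<Rightarrow> qmat" where
  "mdeg i X = (\<lambda>r s c. of_int (c i) * X r s c)"

definition tens :: "(nat \<Rightarrow> nat \<Rightarrow> complex) \<Rightarrow> lat \<Rightarrow> qmat" where
  "tens X a = (\<lambda>i j c. if c = a then X i j else 0)"

text \<open>Elementary matrix E_ij (root vectors of sl_d(C) are multiples of E_ij, i ~= j).\<close>
definition Emat :: "nat \<Rightarrow> nat \<Rightarrow> nat \<Rightarrow> nat \<Rightarrow> complex" where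
  "Emat i j = (\<lambda>r s. if r = i \<and> s = j then 1 else 0)"

definition hdot :: "nat \<Rightarrow> (nat \<Rightarrow> nat \<Rightarrow> complex) \<Rightarrow> bool" where
  "hdot d h \<longleftrightarrow> (\<forall>i j. i \<noteq> j \<or> \<not> i < d \<longrightarrow> h i j = 0) \<and> (\<Sum>i<d. h i i) = 0"

definition Nplus_q :: "nat \<Rightarrow> nat \<Rightarrow> qmat set" where
  "Nplus_q n d = {X. qmat_elem n d X \<and> (\<forall>i j. j \<le> i \<longrightarrow> X i j = (\<lambda>_. 0))}"

text \<open>A module over hat-tau(d,q) on which HC_1 acts trivially is the same as a module over
  sl_d(C_q) + D with bracket [X,Y] = XY - YX (no central term) and [d_i, X] = deg_i X.
  rho gives the action of sl_d(C_q) (values outside sl_d(C_q) are irrelevant),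
  dl i gives the action of d_(i+1), sc is the complex scalar multiplication on V.\<close>
definition is_module ::
  "nat \<Rightarrow> (nat \<Rightarrow> nat \<Rightarrow> complex) \<Rightarrow> nat \<Rightarrow> (complex \<Rightarrow> 'v::ab_group_add \<Rightarrow> 'v)
   \<Rightarrow> (qmat \<Rightarrow> 'v \<Rightarrow> 'v) \<Rightarrow> (nat \<Rightarrow> 'v \<Rightarrow> 'v) \<Rightarrow> bool" where
  "is_module n q d sc rho dl \<longleftrightarrow>
     vector_space sc
   \<and> (\<forall>X\<in>sl_q n q d. Vector_Spaces.linear sc sc (rho X))
   \<and> (\<forall>i<n. Vector_Spaces.linear sc sc (dl i))
   \<and> (\<forall>X\<in>sl_q n q d. \<forall>Y\<in>sl_q n q d. \<forall>v. rho (madd X Y) v = rho X v + rho Y v)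
   \<and> (\<forall>X\<in>sl_q n q d. \<forall>z v. rho (msc z X) v = sc z (rho X v))
   \<and> (\<forall>X\<in>sl_q n q d. \<forall>Y\<in>sl_q n q d. \<forall>v.
        rho (mbr n q d X Y) v = rho X (rho Y v) - rho Y (rho X v))
   \<and> (\<forall>i<n. \<forall>j<n. \<forall>v. dl i (dl j v) = dl j (dl i v))
   \<and> (\<forall>i<n. \<forall>X\<in>sl_q n q d. \<forall>v. dl i (rho X v) - rho X (dl i v) = rho (mdeg i X) v)"

definition irreducible_mod ::
  "nat \<Rightarrow> (nat \<Rightarrow> nat \<Rightarrow> complex) \<Rightarrow> nat \<Rightarrow> (complex \<Rightarrow> 'v::ab_group_add \<Rightarrow> 'v)
   \<Rightarrow> (qmat \<Rightarrow> 'v \<Rightarrow> 'v) \<Rightarrow> (nat \<Rightarrow> 'v \<Rightarrow> 'v) \<Rightarrow> bool" where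
  "irreducible_mod n q d sc rho dl \<longleftrightarrow>
     (\<exists>v::'v. v \<noteq> 0)
   \<and> (\<forall>W. module.subspace sc W
          \<and> (\<forall>X\<in>sl_q n q d. \<forall>w\<in>W. rho X w \<in> W)
          \<and> (\<forall>i<n. \<forall>w\<in>W. dl i w \<in> W)
          \<longrightarrow> W = {0} \<or> W = UNIV)"

text \<open>Weight space for the weight (lam on dot-h, mu_i on d_i); the central elements
  <t_i, t_i^-1> act by zero since HC_1 acts trivially.\<close>
definition wspace ::
  "nat \<Rightarrow> nat \<Rightarrow> (complex \<Rightarrow> 'v::ab_group_add \<Rightarrow> 'v) \<Rightarrow> (qmat \<Rightarrow> 'v \<Rightarrow> 'v) \<Rightarrow> (nat \<Rightarrow> 'v \<Rightarrow> 'v)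
   \<Rightarrow> ((nat \<Rightarrow> nat \<Rightarrow> complex) \<Rightarrow> complex) \<Rightarrow> (nat \<Rightarrow> complex) \<Rightarrow> 'v set" where
  "wspace n d sc rho dl lam mu =
     {v. (\<forall>h. hdot d h \<longrightarrow> rho (tens h (\<lambda>_. 0)) v = sc (lam h) v)
       \<and> (\<forall>i<n. dl i v = sc (mu i) v)}"

definition integrable_fd ::
  "nat \<Rightarrow> nat \<Rightarrow> (complex \<Rightarrow> 'v::ab_group_add \<Rightarrow> 'v) \<Rightarrow> (qmat \<Rightarrow> 'v \<Rightarrow> 'v) \<Rightarrow> (nat \<Rightarrow> 'v \<Rightarrow> 'v) \<Rightarrow> bool" where
  "integrable_fd n d sc rho dl \<longleftrightarrow>
     \<comment> \<open>V is the (automatically direct) sum of its weight spaces\<close>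
     (\<forall>v. v \<in> module.span sc (\<Union>{wspace n d sc rho dl lam mu | lam mu. True}))
     \<comment> \<open>weight spaces are finite-dimensional\<close>
   \<and> (\<forall>lam mu. \<exists>B. finite B \<and> wspace n d sc rho dl lam mu \<subseteq> module.span sc B)
     \<comment> \<open>x_alpha tensor t^m acts locally nilpotently\<close>
   \<and> (\<forall>i j m v. i < d \<and> j < d \<and> i \<noteq> j \<and> lattice n m \<longrightarrow>
        (\<exists>k. (rho (tens (Emat i j) m) ^^ k) v = 0))"

definition Vplus ::
  "nat \<Rightarrow> nat \<Rightarrow> (qmat \<Rightarrow> 'v::ab_group_add \<Rightarrow> 'v) \<Rightarrow> 'v set" where
  "Vplus n d rho = {v. \<forall>X\<in>Nplus_q n d. rho X v = 0}"

end

(*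
  Let H = diag(d-1, d-3, ..., 1-d) \<otimes> 1 and T = h \<otimes> t^a. As t^a is central in C_q, T commutes
  with the diagonal part of sl_d(C_q) and, up to a scalar, with the derivations d_i.
  A nonzero x \<in> V^+ generates V, and by the PBW theorem V = U(N^-) M(x), where M(x) is the
  submodule of x under the diagonal part and D: every vector of M(x) has the H-eigenvalue of x,
  and N^- strictly lowers the real part of H-eigenvalues. Hence if y is an H-eigenvector, either
  its eigenvalue has smaller real part than that of x, or it equals that eigenvalue and y \<in> M(x).
  Since V is spanned by H-eigenvectors, so are the H-invariant subspaces V^+ and V^+ \<inter> ker T.
  If the claim failed we would get eigenvectors u, w \<in> V^+ with T u \<noteq> 0, T w = 0, w \<noteq> 0;
  comparing them in both directions gives u \<in> M(w), on which T vanishes.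
*)
theory Submission
  imports Defs
begin

section \<open>Eigenvectors of a linear operator\<close>

text \<open>The union, not the sum, of the eigenspaces for the eigenvalues in L (so it contains 0).\<close>
definition eigenspaces :: "('a \<Rightarrow> 'b \<Rightarrow> 'b) \<Rightarrow> ('b \<Rightarrow> 'b) \<Rightarrow> 'a set \<Rightarrow> 'b set" where
  "eigenspaces scale f L = {v. \<exists>\<mu>\<in>L. f v = scale \<mu> v}"

lemma eigenspaces_mono: "L \<subseteq> L' \<Longrightarrow> eigenspaces scale f L \<subseteq> eigenspaces scale f L'"
  unfolding eigenspaces_def by blast

context vector_space
begin

lemma span_finite_subset:
  assumes "v \<in> span A"
  obtains t where "finite t" "t \<subseteq> A" "v \<in> span t"
proof -
  from assms obtain t r where "v = (\<Sum>a\<in>t. r a *s a)" "finite t" "t \<subseteq> A"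
    unfolding span_explicit by auto
  moreover have "(\<Sum>a\<in>t. r a *s a) \<in> span t"
    by (intro span_sum span_scale span_base)
  ultimately show thesis using that by blast
qed

lemma span_eigenspaces_finite:
  assumes "v \<in> span (eigenspaces scale f L)"
  obtains L' where "finite L'" "L' \<subseteq> L" "v \<in> span (eigenspaces scale f L')"
proof -
  obtain t where t: "finite t" "t \<subseteq> eigenspaces scale f L" "v \<in> span t"
    using assms by (rule span_finite_subset)
  have "\<forall>e\<in>t. \<exists>\<mu>. \<mu> \<in> L \<and> f e = \<mu> *s e"
    using t(2) unfolding eigenspaces_def by blast
  then obtain ev where ev: "\<And>e. e \<in> t \<Longrightarrow> ev e \<in> L \<and> f e = ev e *s e"
    by metis
  have "t \<subseteq> eigenspaces scale f (ev ` t)"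
    using ev unfolding eigenspaces_def by blast
  then have "v \<in> span (eigenspaces scale f (ev ` t))"
    using t(3) span_mono by blast
  moreover have "ev ` t \<subseteq> L"
    using ev by blast
  ultimately show thesis
    using that t(1) by blast
qed

lemma linear_maps_span_into_span:
  assumes "Vector_Spaces.linear scale scale g" "\<And>e. e \<in> A \<Longrightarrow> g e \<in> span A" "v \<in> span A"
  shows "g v \<in> span A"
proof -
  interpret g: Vector_Spaces.linear scale scale g by fact
  have "g v \<in> span (g ` A)"
    using assms(3) by (simp add: g.span_image)
  also have "\<dots> \<subseteq> span A"
    using assms(2) by (intro span_minimal) auto
  finally show ?thesis .
qed

context
  fixes f :: "'b \<Rightarrow> 'b"
  assumes linear_f: "Vector_Spaces.linear scale scale f"
begin

lemma subspace_eigenspace: "subspace {v. f v = \<mu> *s v}"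
proof -
  interpret f: Vector_Spaces.linear scale scale f by (rule linear_f)
  show ?thesis
    unfolding subspace_def by (simp add: f.add f.scale scale_right_distrib scale_left_commute)
qed

lemma shift_maps_span_eigenspaces:
  assumes "v \<in> span (eigenspaces scale f L)"
  shows "f v - \<nu> *s v \<in> span (eigenspaces scale f (L - {\<nu>}))"
proof -
  interpret f: Vector_Spaces.linear scale scale f by (rule linear_f)
  show ?thesis
    using assms
  proof (induction rule: span_induct_alt)
    case base
    then show ?case by (simp add: span_zero)
  next
    case (step c x y)
    obtain \<mu> where \<mu>: "\<mu> \<in> L" "f x = \<mu> *s x"
      using step.hyps(1) unfolding eigenspaces_def by auto
    have "f x - \<nu> *s x = (\<mu> - \<nu>) *s x"
      using \<mu>(2) by (simp add: scale_left_diff_distrib)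
    moreover have "(\<mu> - \<nu>) *s x \<in> span (eigenspaces scale f (L - {\<nu>}))"
    proof (cases "\<mu> = \<nu>")
      case False
      then have "x \<in> eigenspaces scale f (L - {\<nu>})"
        using \<mu> unfolding eigenspaces_def by blast
      then show ?thesis by (intro span_scale span_base)
    qed (simp add: span_zero)
    ultimately have "c *s (f x - \<nu> *s x) + (f y - \<nu> *s y) \<in> span (eigenspaces scale f (L - {\<nu>}))"
      using step.IH by (intro span_add span_scale) simp_all
    moreover have "f (c *s x + y) - \<nu> *s (c *s x + y) = c *s (f x - \<nu> *s x) + (f y - \<nu> *s y)"
      by (simp add: f.add f.scale scale_right_diff_distrib scale_right_distrib scale_left_commute)
    ultimately show ?case
      by simp
  qed
qed

lemma eigenvector_in_span_other_eigenspaces_eq_0_finite: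
  assumes "finite L" "v \<in> span (eigenspaces scale f L)" "\<gamma> \<notin> L" "f v = \<gamma> *s v"
  shows "v = 0"
  using assms
proof (induction L arbitrary: v rule: finite_induct)
  case empty
  then show ?case by (simp add: eigenspaces_def)
next
  case (insert \<mu> L)
  interpret f: Vector_Spaces.linear scale scale f by (rule linear_f)
  have "f v - \<mu> *s v = (\<gamma> - \<mu>) *s v"
    using insert.prems(3) by (simp add: scale_left_diff_distrib)
  moreover have "f v - \<mu> *s v \<in> span (eigenspaces scale f L)"
    using shift_maps_span_eigenspaces[OF insert.prems(1), of \<mu>] insert.hyps(2) by simp
  ultimately have in_span: "(\<gamma> - \<mu>) *s v \<in> span (eigenspaces scale f L)"
    by simp
  have eigen: "f ((\<gamma> - \<mu>) *s v) = \<gamma> *s ((\<gamma> - \<mu>) *s v)"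
    using insert.prems(3) by (simp only: f.scale scale_left_commute)
  have "(\<gamma> - \<mu>) *s v = 0"
    using insert.IH[OF in_span] eigen insert.prems(2) by blast
  then show ?case
    using insert.prems(2) by simp
qed

lemma eigenvector_in_span_other_eigenspaces_eq_0:
  assumes "v \<in> span (eigenspaces scale f L)" "\<gamma> \<notin> L" "f v = \<gamma> *s v"
  shows "v = 0"
proof -
  obtain L' where "finite L'" "L' \<subseteq> L" "v \<in> span (eigenspaces scale f L')"
    using assms(1) by (rule span_eigenspaces_finite)
  then show ?thesis
    using eigenvector_in_span_other_eigenspaces_eq_0_finite assms(2,3) by blast
qed

lemma invariant_subspace_in_span_eigenvectors_finite:
  assumes "subspace S" "f ` S \<subseteq> S"
  shows "finite L \<Longrightarrow> v \<in> S \<Longrightarrow> v \<in> span (eigenspaces scale f L) \<Longrightarrow>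
    v \<in> span (S \<inter> eigenspaces scale f UNIV)"
proof (induction L arbitrary: v rule: finite_psubset_induct)
  case (psubset L)
  show ?case
  proof (cases "\<exists>\<mu>\<in>L. \<exists>\<nu>\<in>L. \<mu> \<noteq> \<nu>")
    case True
    then obtain \<mu> \<nu> where \<mu>\<nu>: "\<mu> \<in> L" "\<nu> \<in> L" "\<mu> \<noteq> \<nu>" by blast
    txt \<open>(f - \<kappa>) v stays in S and needs one eigenvalue less; the difference of two such
      vectors is a nonzero multiple of v.\<close>
    have shift_in_span: "f v - \<kappa> *s v \<in> span (S \<inter> eigenspaces scale f UNIV)" if "\<kappa> \<in> L" for \<kappa>
      using that psubset.prems
      by (intro psubset.IH[of "L - {\<kappa>}"] shift_maps_span_eigenspaces)
         (use assms in \<open>auto intro: subspace_diff subspace_scale\<close>)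
    have "(f v - \<nu> *s v) - (f v - \<mu> *s v) \<in> span (S \<inter> eigenspaces scale f UNIV)"
      using span_diff[OF shift_in_span[OF \<mu>\<nu>(2)] shift_in_span[OF \<mu>\<nu>(1)]] .
    moreover have "(f v - \<nu> *s v) - (f v - \<mu> *s v) = (\<mu> - \<nu>) *s v"
      by (simp add: scale_left_diff_distrib)
    ultimately have "(\<mu> - \<nu>) *s v \<in> span (S \<inter> eigenspaces scale f UNIV)"
      by simp
    then have "inverse (\<mu> - \<nu>) *s ((\<mu> - \<nu>) *s v) \<in> span (S \<inter> eigenspaces scale f UNIV)"
      by (rule span_scale)
    then show ?thesis
      using \<mu>\<nu>(3) by simp
  next
    case False
    then obtain \<mu> where "L \<subseteq> {\<mu>}" by blast
    then have "span (eigenspaces scale f L) \<subseteq> {v. f v = \<mu> *s v}"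
      by (intro span_minimal subspace_eigenspace) (auto simp: eigenspaces_def)
    then have "v \<in> S \<inter> eigenspaces scale f UNIV"
      using psubset.prems by (auto simp: eigenspaces_def)
    then show ?thesis by (rule span_base)
  qed
qed

lemma invariant_subspace_in_span_eigenvectors:
  assumes "span (eigenspaces scale f UNIV) = UNIV"
    and "subspace S" "f ` S \<subseteq> S" "v \<in> S"
  shows "v \<in> span (S \<inter> eigenspaces scale f UNIV)"
proof -
  have "v \<in> span (eigenspaces scale f UNIV)"
    using assms(1) by simp
  then obtain L where "finite L" "v \<in> span (eigenspaces scale f L)"
    by (rule span_eigenspaces_finite)
  with assms(4) show ?thesis
    by (intro invariant_subspace_in_span_eigenvectors_finite[OF assms(2,3)])
qed

lemma invariant_subspace_eigenvector_not_in_kernel: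
  assumes "span (eigenspaces scale f UNIV) = UNIV"
    and "subspace S" "f ` S \<subseteq> S"
    and "Vector_Spaces.linear scale scale g" "v \<in> S" "g v \<noteq> 0"
  obtains e \<mu> where "e \<in> S" "f e = \<mu> *s e" "g e \<noteq> 0"
proof (rule ccontr)
  assume no_such: "\<not> thesis"
  note witness = that
  interpret g: Vector_Spaces.linear scale scale g by fact
  have "g e = 0" if "e \<in> S \<inter> eigenspaces scale f UNIV" for e
    using that no_such witness unfolding eigenspaces_def by blast
  moreover have "v \<in> span (S \<inter> eigenspaces scale f UNIV)"
    using invariant_subspace_in_span_eigenvectors[OF assms(1-3,5)] .
  ultimately have "g v = 0"
    by (rule g.eq_0_on_span)
  with assms(6) show False ..
qed

end

end

section \<open>Monomials of the quantum torus\<close>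

definition qmonom :: "complex \<Rightarrow> lat \<Rightarrow> qt" where
  "qmonom \<alpha> b = (\<lambda>c. if c = b then \<alpha> else 0)"

lemma lat_diff_eq_iff: "((\<lambda>i. c i - a i) = (b::lat)) \<longleftrightarrow> (a = (\<lambda>i. c i - b i))"
  by (auto simp: fun_eq_iff) (metis add_diff_cancel_left' diff_add_cancel)

lemma qmult_qmonom_left:
  "qmult n q (qmonom \<alpha> b) y c = \<alpha> * y (\<lambda>i. c i - b i) * sigma n q b (\<lambda>i. c i - b i)"
proof (cases "\<alpha> = 0")
  case True
  then have "{a. qmonom \<alpha> b a \<noteq> 0} = {}" by (auto simp: qmonom_def)
  then show ?thesis using True by (simp add: qmult_def)
next
  case False
  then have "{a. qmonom \<alpha> b a \<noteq> 0} = {b}" by (auto simp: qmonom_def)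
  then show ?thesis by (simp add: qmult_def qmonom_def)
qed

lemma qmult_qmonom_right:
  assumes "finite {a. y a \<noteq> 0}"
  shows "qmult n q y (qmonom \<alpha> b) c = y (\<lambda>i. c i - b i) * \<alpha> * sigma n q (\<lambda>i. c i - b i) b"
proof -
  have "qmult n q y (qmonom \<alpha> b) c =
      (\<Sum>a\<in>{a. y a \<noteq> 0}. if a = (\<lambda>i. c i - b i) then y a * \<alpha> * sigma n q a b else 0)"
    unfolding qmult_def qmonom_def by (rule sum.cong) (auto simp: lat_diff_eq_iff)
  also have "\<dots> = y (\<lambda>i. c i - b i) * \<alpha> * sigma n q (\<lambda>i. c i - b i) b"
    using assms by (simp add: sum.delta)
  finally show ?thesis .
qed

lemma qmult_zero_left [simp]: "qmult n q (\<lambda>_. 0) y = (\<lambda>_. 0)"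
  by (simp add: qmult_def)

lemma qmult_zero_right [simp]: "qmult n q x (\<lambda>_. 0) = (\<lambda>_. 0)"
  by (simp add: qmult_def)

lemma sigma_zero_left [simp]: "sigma n q (\<lambda>_. 0) b = 1"
  unfolding sigma_def by (intro prod.neutral ballI) auto

lemma sigma_zero_right [simp]: "sigma n q a (\<lambda>_. 0) = 1"
  unfolding sigma_def by (intro prod.neutral ballI) auto

lemma qmult_qmonom_zero_left: "qmult n q (qmonom \<alpha> (\<lambda>_. 0)) y = (\<lambda>c. \<alpha> * y c)"
  by (rule ext) (simp add: qmult_qmonom_left)

lemma qmult_qmonom_zero_right:
  "finite {a. y a \<noteq> 0} \<Longrightarrow> qmult n q y (qmonom \<alpha> (\<lambda>_. 0)) = (\<lambda>c. \<alpha> * y c)"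
  by (rule ext) (simp add: qmult_qmonom_right)

lemma lattice_zero [simp]: "lattice n (\<lambda>_. 0)"
  by (simp add: lattice_def)

lemma qt_elem_zero [simp]: "qt_elem n (\<lambda>_. 0)"
  by (simp add: qt_elem_def)

lemma qt_elem_finite: "qt_elem n x \<Longrightarrow> finite {a. x a \<noteq> 0}"
  unfolding qt_elem_def by blast

lemma qt_elem_qmonom: "lattice n b \<Longrightarrow> qt_elem n (qmonom \<alpha> b)"
  unfolding qt_elem_def qmonom_def by (auto intro: finite_subset[of _ "{b}"])

lemma qt_elem_add: "qt_elem n x \<Longrightarrow> qt_elem n y \<Longrightarrow> qt_elem n (\<lambda>c. x c + y c)"
  unfolding qt_elem_def
  by (auto intro: finite_subset[of _ "{c. x c \<noteq> 0} \<union> {c. y c \<noteq> 0}"]) (metis add.right_neutral)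

lemma qt_elem_diff: "qt_elem n x \<Longrightarrow> qt_elem n y \<Longrightarrow> qt_elem n (\<lambda>c. x c - y c)"
  unfolding qt_elem_def
  by (auto intro: finite_subset[of _ "{c. x c \<noteq> 0} \<union> {c. y c \<noteq> 0}"]) (metis diff_self)

lemma qt_elem_deg: "qt_elem n x \<Longrightarrow> qt_elem n (\<lambda>c. of_int (c i) * x c)"
  unfolding qt_elem_def by (auto intro: finite_subset[of _ "{c. x c \<noteq> 0}"])

lemma qt_elem_sum:
  "finite A \<Longrightarrow> (\<And>k. k \<in> A \<Longrightarrow> qt_elem n (f k)) \<Longrightarrow> qt_elem n (\<lambda>c. \<Sum>k\<in>A. f k c)"
  by (induction A rule: finite_induct) (simp_all add: qt_elem_add)

lemma qmult_nonzero_split: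
  assumes "qmult n q x y c \<noteq> 0"
  obtains a where "x a \<noteq> 0" "y (\<lambda>i. c i - a i) \<noteq> 0"
proof (rule ccontr)
  assume "\<not> thesis"
  then have "qmult n q x y c = 0"
    using that unfolding qmult_def by (intro sum.neutral) auto
  then show False using assms by simp
qed

lemma qt_elem_mult: "qt_elem n x \<Longrightarrow> qt_elem n y \<Longrightarrow> qt_elem n (qmult n q x y)"
proof -
  assume x: "qt_elem n x" and y: "qt_elem n y"
  let ?X = "{a. x a \<noteq> 0}" and ?Y = "{a. y a \<noteq> 0}"
  have "{c. qmult n q x y c \<noteq> 0} \<subseteq> (\<lambda>(a, b). (\<lambda>i. a i + b i)) ` (?X \<times> ?Y)"
  proof
    fix c assume "c \<in> {c. qmult n q x y c \<noteq> 0}"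
    then obtain a where "x a \<noteq> 0" "y (\<lambda>i. c i - a i) \<noteq> 0"
      using qmult_nonzero_split by blast
    then show "c \<in> (\<lambda>(a, b). (\<lambda>i. a i + b i)) ` (?X \<times> ?Y)"
      by (intro image_eqI[of _ _ "(a, \<lambda>i. c i - a i)"]) auto
  qed
  moreover have "finite ((\<lambda>(a, b). (\<lambda>i. a i + b i)) ` (?X \<times> ?Y))"
    using x y unfolding qt_elem_def by auto
  moreover have "lattice n c" if nonzero: "qmult n q x y c \<noteq> 0" for c
  proof -
    obtain a where "x a \<noteq> 0" "y (\<lambda>i. c i - a i) \<noteq> 0"
      using nonzero by (rule qmult_nonzero_split)
    then have "lattice n a" "lattice n (\<lambda>i. c i - a i)"
      using x y unfolding qt_elem_def by auto
    then show ?thesis unfolding lattice_def by auto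
  qed
  ultimately show ?thesis unfolding qt_elem_def by (auto intro: finite_subset)
qed

lemma qparam_nonzero: "qparam n q \<Longrightarrow> i < n \<Longrightarrow> j < n \<Longrightarrow> q i j \<noteq> 0"
  unfolding qparam_def by (metis zero_power zero_neq_one)

lemma sigma_swap:
  assumes qp: "qparam n q"
  shows "sigma n q a b = fq n q a b * sigma n q b a"
proof -
  define g where "g i j = q j i powi (a j * b i)" for i j
  define A where "A = (\<Prod>i<n. \<Prod>j<n. if i < j then g i j else 1)"
  define B where "B = (\<Prod>i<n. \<Prod>j<n. if j < i then g i j else 1)"
  have "fq n q a b = (\<Prod>i<n. \<Prod>j<n. (if i < j then g i j else 1) * (if j < i then g i j else 1))"
    unfolding fq_def g_def
  proof (intro prod.cong refl)
    fix i j assume "i \<in> {..<n}" "j \<in> {..<n}"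
    then have "q i i = 1" using qp unfolding qparam_def by blast
    then show "q j i powi (a j * b i) =
        (if i < j then q j i powi (a j * b i) else 1) * (if j < i then q j i powi (a j * b i) else 1)"
      by (cases "i < j"; cases "j < i") auto
  qed
  also have "\<dots> = A * B" unfolding A_def B_def by (simp only: prod.distrib)
  finally have fq_AB: "fq n q a b = A * B" .
  have "sigma n q b a = (\<Prod>j<n. \<Prod>i<n. if i < j then q j i powi (b j * a i) else 1)"
    unfolding sigma_def by (rule prod.swap)
  also have "\<dots> = (\<Prod>i<n. \<Prod>j<n. if j < i then inverse (g i j) else 1)"
  proof (intro prod.cong refl)
    fix i j assume "i \<in> {..<n}" "j \<in> {..<n}"
    then have "q i j = inverse (q j i)" using qp unfolding qparam_def by blast
    then show "(if j < i then q i j powi (b i * a j) else 1) = (if j < i then inverse (g i j) else 1)"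
      unfolding g_def by (simp add: power_int_inverse mult.commute)
  qed
  finally have "B * sigma n q b a =
      (\<Prod>i<n. \<Prod>j<n. (if j < i then g i j else 1) * (if j < i then inverse (g i j) else 1))"
    unfolding B_def by (simp only: prod.distrib)
  also have "\<dots> = 1"
  proof (intro prod.neutral ballI)
    fix i j assume "i \<in> {..<n}" "j \<in> {..<n}"
    then have "g i j \<noteq> 0" unfolding g_def using qparam_nonzero[OF qp] by auto
    then show "(if j < i then g i j else 1) * (if j < i then inverse (g i j) else 1) = 1" by auto
  qed
  finally have "B * sigma n q b a = 1" .
  moreover have "sigma n q a b = A" unfolding A_def g_def sigma_def ..
  ultimately show ?thesis using fq_AB by (metis mult.assoc mult.right_neutral)
qed

lemma zero_in_rad: "(\<lambda>_. 0) \<in> rad n q"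
  unfolding rad_def fq_def by simp

lemma qmult_qmonom_rad_commute:
  assumes qp: "qparam n q" and a: "a \<in> rad n q" and y: "qt_elem n y"
  shows "qmult n q (qmonom \<alpha> a) y = qmult n q y (qmonom \<alpha> a)"
proof (rule ext)
  fix c
  have fin: "finite {a. y a \<noteq> 0}" using y by (rule qt_elem_finite)
  show "qmult n q (qmonom \<alpha> a) y c = qmult n q y (qmonom \<alpha> a) c"
  proof (cases "y (\<lambda>i. c i - a i) = 0")
    case True
    then show ?thesis by (simp add: qmult_qmonom_left qmult_qmonom_right[OF fin])
  next
    case False
    then have "lattice n (\<lambda>i. c i - a i)" using y unfolding qt_elem_def by auto
    then have "fq n q a (\<lambda>i. c i - a i) = 1" using a unfolding rad_def by auto
    then have "sigma n q a (\<lambda>i. c i - a i) = sigma n q (\<lambda>i. c i - a i) a"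
      using sigma_swap[OF qp, of a "\<lambda>i. c i - a i"] by simp
    then show ?thesis by (simp add: qmult_qmonom_left qmult_qmonom_right[OF fin])
  qed
qed

section \<open>Matrices over the quantum torus\<close>

definition qsingle :: "nat \<Rightarrow> nat \<Rightarrow> qt \<Rightarrow> qmat" where
  "qsingle i j y = (\<lambda>r s. if r = i \<and> s = j then y else (\<lambda>_. 0))"

definition is_diag :: "qmat \<Rightarrow> bool" where
  "is_diag D \<longleftrightarrow> (\<forall>r s. r \<noteq> s \<longrightarrow> D r s = (\<lambda>_. 0))"

definition qmat_zero :: qmat where
  "qmat_zero = (\<lambda>r s. (\<lambda>_. 0))"

lemma qmat_elem_outside: "qmat_elem n d X \<Longrightarrow> \<not> (r < d \<and> s < d) \<Longrightarrow> X r s = (\<lambda>_. 0)"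
  unfolding qmat_elem_def by blast

lemma qmat_elem_entry: "qmat_elem n d X \<Longrightarrow> qt_elem n (X r s)"
  unfolding qmat_elem_def by (metis qt_elem_zero)

lemma qmat_elem_qsingle: "i < d \<Longrightarrow> j < d \<Longrightarrow> qt_elem n y \<Longrightarrow> qmat_elem n d (qsingle i j y)"
  unfolding qmat_elem_def qsingle_def by auto

lemma mmul_qsingle_left:
  assumes "j < d"
  shows "mmul n q d (qsingle i j y) A r s c = (if r = i then qmult n q y (A j s) c else 0)"
proof -
  have "mmul n q d (qsingle i j y) A r s c =
      (\<Sum>k<d. if k = j then (if r = i then qmult n q y (A j s) c else 0) else 0)"
    unfolding mmul_def qsingle_def by (intro sum.cong) auto
  then show ?thesis using assms by simp
qed

lemma mmul_qsingle_right:
  assumes "i < d"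
  shows "mmul n q d A (qsingle i j y) r s c = (if s = j then qmult n q (A r i) y c else 0)"
proof -
  have "mmul n q d A (qsingle i j y) r s c =
      (\<Sum>k<d. if k = i then (if s = j then qmult n q (A r i) y c else 0) else 0)"
    unfolding mmul_def qsingle_def by (intro sum.cong) auto
  then show ?thesis using assms by simp
qed

lemma mbr_qsingle:
  assumes "i < d" "j < d"
  shows "mbr n q d A (qsingle i j y) r s c =
    (if s = j then qmult n q (A r i) y c else 0) - (if r = i then qmult n q y (A j s) c else 0)"
  unfolding mbr_def using mmul_qsingle_left[OF assms(2)] mmul_qsingle_right[OF assms(1)] by simp

lemma mmul_diag_left:
  assumes "is_diag D" "qmat_elem n d D"
  shows "mmul n q d D B r s c = qmult n q (D r r) (B r s) c"
proof -
  have "mmul n q d D B r s c = (\<Sum>k<d. if k = r then qmult n q (D r r) (B r s) c else 0)"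
    unfolding mmul_def using assms(1) unfolding is_diag_def by (intro sum.cong) auto
  then show ?thesis
    using qmat_elem_outside[OF assms(2), of r r] by simp
qed

lemma mmul_diag_right:
  assumes "is_diag D" "qmat_elem n d D"
  shows "mmul n q d B D r s c = qmult n q (B r s) (D s s) c"
proof -
  have "mmul n q d B D r s c = (\<Sum>k<d. if k = s then qmult n q (B r s) (D s s) c else 0)"
    unfolding mmul_def using assms(1) unfolding is_diag_def by (intro sum.cong) auto
  then show ?thesis
    using qmat_elem_outside[OF assms(2), of s s] by simp
qed

lemma mbr_diag:
  assumes "is_diag D" "qmat_elem n d D"
  shows "mbr n q d D B r s c = qmult n q (D r r) (B r s) c - qmult n q (B r s) (D s s) c"
  unfolding mbr_def using mmul_diag_left[OF assms] mmul_diag_right[OF assms] by simp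

lemma mbr_diag_qsingle:
  assumes "is_diag D" "qmat_elem n d D"
  shows "mbr n q d D (qsingle i j y) = qsingle i j (\<lambda>c. qmult n q (D i i) y c - qmult n q y (D j j) c)"
  by (auto simp: fun_eq_iff mbr_diag[OF assms] qsingle_def)

lemma mmul_outside:
  assumes "qmat_elem n d A" "qmat_elem n d B" "\<not> (i < d \<and> j < d)"
  shows "mmul n q d A B i j = (\<lambda>_. 0)"
proof (cases "i < d")
  case True
  then have "B k j = (\<lambda>_. 0)" for k using qmat_elem_outside[OF assms(2)] assms(3) by auto
  then show ?thesis unfolding mmul_def by simp
next
  case False
  then have "A i k = (\<lambda>_. 0)" for k using qmat_elem_outside[OF assms(1)] by auto
  then show ?thesis unfolding mmul_def by simp
qed

lemma qmat_elem_mbr: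
  assumes A: "qmat_elem n d A" and B: "qmat_elem n d B"
  shows "qmat_elem n d (mbr n q d A B)"
  unfolding qmat_elem_def
proof (intro allI conjI impI)
  fix i j
  show "qt_elem n (mbr n q d A B i j)"
    unfolding mbr_def mmul_def
    by (intro qt_elem_diff qt_elem_sum qt_elem_mult qmat_elem_entry[OF A] qmat_elem_entry[OF B]) auto
  assume "\<not> (i < d \<and> j < d)"
  then show "mbr n q d A B i j = (\<lambda>_. 0)"
    unfolding mbr_def using mmul_outside[OF A B] mmul_outside[OF B A] by simp
qed

lemma sl_q_if_zero_diagonal:
  assumes "qmat_elem n d X" "\<And>r. X r r = (\<lambda>_. 0)"
  shows "X \<in> sl_q n q d"
proof -
  have "mtrace d X = (\<lambda>_. 0)" unfolding mtrace_def using assms(2) by simp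
  then show ?thesis using assms(1) unfolding sl_q_def by (simp add: comm_span.zero)
qed

lemma qmat_zero_sl: "qmat_zero \<in> sl_q n q d"
  by (rule sl_q_if_zero_diagonal) (auto simp: qmat_zero_def qmat_elem_def)

lemma qsingle_sl: "i < d \<Longrightarrow> j < d \<Longrightarrow> i \<noteq> j \<Longrightarrow> qt_elem n y \<Longrightarrow> qsingle i j y \<in> sl_q n q d"
  by (rule sl_q_if_zero_diagonal[OF qmat_elem_qsingle]) (auto simp: qsingle_def)

lemma Nplus_sl: "U \<in> Nplus_q n d \<Longrightarrow> U \<in> sl_q n q d"
  unfolding Nplus_q_def by (auto intro!: sl_q_if_zero_diagonal)

lemma mbr_qsingle_sl:
  assumes A: "qmat_elem n d A" and ij: "i < d" "j < d" and y: "qt_elem n y"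
  shows "mbr n q d A (qsingle i j y) \<in> sl_q n q d"
proof -
  have "mtrace d (mbr n q d A (qsingle i j y)) c = qmult n q (A j i) y c - qmult n q y (A j i) c" for c
  proof -
    have "mtrace d (mbr n q d A (qsingle i j y)) c =
        (\<Sum>r<d. if r = j then qmult n q (A r i) y c else 0) - (\<Sum>r<d. if r = i then qmult n q y (A j r) c else 0)"
      unfolding mtrace_def mbr_qsingle[OF ij] by (rule sum_subtractf)
    then show ?thesis using ij by simp
  qed
  then have "mtrace d (mbr n q d A (qsingle i j y)) =
      (\<lambda>c. 0 + 1 * (qmult n q (A j i) y c - qmult n q y (A j i) c))"
    by auto
  then have "mtrace d (mbr n q d A (qsingle i j y)) \<in> comm_span n q"
    by (simp only:) (rule comm_span.step[OF comm_span.zero qmat_elem_entry[OF A] y])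
  moreover have "qmat_elem n d (mbr n q d A (qsingle i j y))"
    by (rule qmat_elem_mbr[OF A qmat_elem_qsingle[OF ij y]])
  ultimately show ?thesis unfolding sl_q_def by simp
qed

lemma tens_eq_qmonom: "tens X a i j = qmonom (X i j) a"
  unfolding tens_def qmonom_def by auto

lemma tens_qmat_elem:
  assumes "hdot d h" "lattice n a"
  shows "qmat_elem n d (tens h a)"
  unfolding qmat_elem_def tens_eq_qmonom
proof (intro allI conjI impI)
  fix i j
  show "qt_elem n (qmonom (h i j) a)" using assms(2) by (rule qt_elem_qmonom)
  assume "\<not> (i < d \<and> j < d)"
  then have "h i j = 0" using assms(1) unfolding hdot_def by auto
  then show "qmonom (h i j) a = (\<lambda>_. 0)" unfolding qmonom_def by auto
qed

lemma tens_is_diag: "hdot d h \<Longrightarrow> is_diag (tens h a)"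
  unfolding is_diag_def hdot_def tens_def by (auto simp: fun_eq_iff)

lemma tens_sl: "hdot d h \<Longrightarrow> lattice n a \<Longrightarrow> tens h a \<in> sl_q n q d"
proof -
  assume h: "hdot d h" and a: "lattice n a"
  have "mtrace d (tens h a) = (\<lambda>c. if c = a then (\<Sum>i<d. h i i) else 0)"
    unfolding mtrace_def tens_def by auto
  also have "\<dots> = (\<lambda>_. 0)" using h unfolding hdot_def by auto
  finally show ?thesis using tens_qmat_elem[OF h a] unfolding sl_q_def by (simp add: comm_span.zero)
qed

lemma tens_rad_sl: "hdot d h \<Longrightarrow> a \<in> rad n q \<Longrightarrow> tens h a \<in> sl_q n q d"
  unfolding rad_def by (auto intro: tens_sl)

lemma mdeg_qsingle: "mdeg k (qsingle i j y) = qsingle i j (\<lambda>c. of_int (c k) * y c)"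
  unfolding mdeg_def qsingle_def by (auto simp: fun_eq_iff)

lemma mdeg_Nplus: "U \<in> Nplus_q n d \<Longrightarrow> mdeg k U \<in> Nplus_q n d"
  unfolding Nplus_q_def qmat_elem_def mdeg_def by (auto intro: qt_elem_deg)

lemma mdeg_tens: "mdeg k (tens X b) = msc (of_int (b k)) (tens X b)"
  unfolding mdeg_def msc_def tens_def by (auto simp: fun_eq_iff)

lemma msc_zero: "msc 0 X = qmat_zero"
  unfolding msc_def qmat_zero_def by auto

lemma mbr_diag_Nplus:
  assumes "is_diag D" "qmat_elem n d D" "U \<in> Nplus_q n d"
  shows "mbr n q d D U \<in> Nplus_q n d"
proof -
  have "qmat_elem n d U" using assms(3) unfolding Nplus_q_def by auto
  then have "qmat_elem n d (mbr n q d D U)" using qmat_elem_mbr assms(2) by blast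
  moreover have "mbr n q d D U r s = (\<lambda>_. 0)" if "s \<le> r" for r s
  proof -
    have "U r s = (\<lambda>_. 0)" using assms(3) that unfolding Nplus_q_def by auto
    then show ?thesis by (intro ext) (simp add: mbr_diag[OF assms(1,2)])
  qed
  ultimately show ?thesis unfolding Nplus_q_def by auto
qed

lemma mbr_tens_rad_diag:
  assumes "qparam n q" "a \<in> rad n q" "hdot d h" "is_diag B" "qmat_elem n d B"
  shows "mbr n q d (tens h a) B = qmat_zero"
proof (intro ext)
  fix r s c
  have a: "lattice n a" using assms(2) unfolding rad_def by auto
  show "mbr n q d (tens h a) B r s c = qmat_zero r s c"
  proof (cases "r = s")
    case True
    then show ?thesis
      unfolding mbr_diag[OF tens_is_diag[OF assms(3)] tens_qmat_elem[OF assms(3) a]]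
        tens_eq_qmonom qmat_zero_def
      using qmult_qmonom_rad_commute[OF assms(1,2) qmat_elem_entry[OF assms(5)]] by simp
  next
    case False
    then have "B r s = (\<lambda>_. 0)" using assms(4) unfolding is_diag_def by auto
    then show ?thesis
      unfolding mbr_diag[OF tens_is_diag[OF assms(3)] tens_qmat_elem[OF assms(3) a]] qmat_zero_def
      by simp
  qed
qed

definition qmat_diag_part :: "qmat \<Rightarrow> qmat" where
  "qmat_diag_part X = (\<lambda>r s. if r = s then X r s else (\<lambda>_. 0))"

definition qmat_upper_part :: "qmat \<Rightarrow> qmat" where
  "qmat_upper_part X = (\<lambda>r s. if r < s then X r s else (\<lambda>_. 0))"

definition qmat_restrict :: "(nat \<times> nat) set \<Rightarrow> qmat \<Rightarrow> qmat" where
  "qmat_restrict P X = (\<lambda>r s. if (r, s) \<in> P then X r s else (\<lambda>_. 0))"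

definition lower_pairs :: "nat \<Rightarrow> (nat \<times> nat) set" where
  "lower_pairs d = {(i, j). j < i \<and> i < d}"

lemma finite_lower_pairs: "finite (lower_pairs d)"
  by (rule finite_subset[of _ "{..<d} \<times> {..<d}"]) (auto simp: lower_pairs_def)

lemma qmat_triangular_decomposition:
  assumes "qmat_elem n d X"
  shows "X = madd (madd (qmat_restrict (lower_pairs d) X) (qmat_diag_part X)) (qmat_upper_part X)"
proof (intro ext)
  fix r s c
  show "X r s c = madd (madd (qmat_restrict (lower_pairs d) X) (qmat_diag_part X)) (qmat_upper_part X) r s c"
    using qmat_elem_outside[OF assms, of r s]
    unfolding madd_def qmat_restrict_def qmat_diag_part_def qmat_upper_part_def lower_pairs_def
    by (cases "r < d \<and> s < d") auto
qed

lemma qmat_diag_part_sl: "X \<in> sl_q n q d \<Longrightarrow> qmat_diag_part X \<in> sl_q n q d"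
  unfolding sl_q_def qmat_elem_def mtrace_def qmat_diag_part_def by auto

lemma is_diag_qmat_diag_part: "is_diag (qmat_diag_part X)"
  unfolding is_diag_def qmat_diag_part_def by auto

lemma qmat_upper_part_Nplus: "qmat_elem n d X \<Longrightarrow> qmat_upper_part X \<in> Nplus_q n d"
  unfolding Nplus_q_def qmat_elem_def qmat_upper_part_def by auto

lemma qmat_restrict_lower_sl:
  assumes "P \<subseteq> lower_pairs d" "qmat_elem n d X"
  shows "qmat_restrict P X \<in> sl_q n q d"
proof (rule sl_q_if_zero_diagonal)
  show "qmat_elem n d (qmat_restrict P X)"
    using assms qmat_elem_entry[OF assms(2)]
    unfolding qmat_elem_def qmat_restrict_def lower_pairs_def by auto
  show "qmat_restrict P X r r = (\<lambda>_. 0)" for r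
    using assms(1) unfolding qmat_restrict_def lower_pairs_def by auto
qed

lemma qmat_restrict_empty: "qmat_restrict {} X = qmat_zero"
  unfolding qmat_restrict_def qmat_zero_def by auto

lemma qmat_restrict_insert:
  "p \<notin> P \<Longrightarrow> qmat_restrict (insert p P) X = madd (qsingle (fst p) (snd p) (X (fst p) (snd p))) (qmat_restrict P X)"
  unfolding qmat_restrict_def madd_def qsingle_def by (auto simp: fun_eq_iff)

text \<open>Twice the Weyl vector, so that its bracket with E_ij for i > j is a negative multiple of E_ij.\<close>
definition hrho :: "nat \<Rightarrow> nat \<Rightarrow> nat \<Rightarrow> complex" where
  "hrho d = (\<lambda>r s. if r = s \<and> r < d then of_nat d - 1 - 2 * of_nat r else 0)"

abbreviation Hrho :: "nat \<Rightarrow> qmat" where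
  "Hrho d \<equiv> tens (hrho d) (\<lambda>_. 0)"

lemma sum_arith_progression: "(\<Sum>r<m. (c - 2 * of_nat r :: complex)) = of_nat m * c - of_nat m * (of_nat m - 1)"
  by (induction m) (auto simp: algebra_simps)

lemma hdot_hrho: "hdot d (hrho d)"
proof -
  have "(\<Sum>i<d. hrho d i i) = (\<Sum>r<d. ((of_nat d - 1) - 2 * of_nat r :: complex))"
    unfolding hrho_def by simp
  also have "\<dots> = 0" by (simp add: sum_arith_progression)
  finally show ?thesis unfolding hdot_def hrho_def by auto
qed

lemma Hrho_sl: "Hrho d \<in> sl_q n q d"
  by (rule tens_sl[OF hdot_hrho]) simp

lemma mbr_Hrho:
  assumes "qmat_elem n d B"
  shows "mbr n q d (Hrho d) B r s c = (hrho d r r - hrho d s s) * B r s c"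
proof -
  have fin: "finite {a. B r s a \<noteq> 0}" using qmat_elem_entry[OF assms] by (rule qt_elem_finite)
  show ?thesis
    unfolding mbr_diag[OF tens_is_diag[OF hdot_hrho] tens_qmat_elem[OF hdot_hrho lattice_zero]]
      tens_eq_qmonom qmult_qmonom_zero_left qmult_qmonom_zero_right[OF fin]
    by (simp add: algebra_simps)
qed

lemma mbr_Hrho_qsingle:
  assumes "i < d" "j < d" "qt_elem n y"
  shows "mbr n q d (Hrho d) (qsingle i j y) = msc (2 * (of_nat j - of_nat i)) (qsingle i j y)"
proof (intro ext)
  fix r s c
  have "hrho d i i - hrho d j j = 2 * (of_nat j - of_nat i)"
    using assms unfolding hrho_def by (simp add: algebra_simps)
  then show "mbr n q d (Hrho d) (qsingle i j y) r s c = msc (2 * (of_nat j - of_nat i)) (qsingle i j y) r s c"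
    unfolding mbr_Hrho[OF qmat_elem_qsingle[OF assms]] by (auto simp: msc_def qsingle_def)
qed

section \<open>Modules over sl_d(C_q) + D\<close>

definition lower_singles :: "nat \<Rightarrow> nat \<Rightarrow> qmat set" where
  "lower_singles n d = {qsingle i j y | i j y. j < i \<and> i < d \<and> qt_elem n y}"

definition diag_sl :: "nat \<Rightarrow> (nat \<Rightarrow> nat \<Rightarrow> complex) \<Rightarrow> nat \<Rightarrow> qmat set" where
  "diag_sl n q d = {D \<in> sl_q n q d. is_diag D}"

lemma lower_singles_sl: "Y \<in> lower_singles n d \<Longrightarrow> Y \<in> sl_q n q d"
  unfolding lower_singles_def by (auto intro!: qsingle_sl)

lemma diag_slD:
  assumes "D \<in> diag_sl n q d"
  shows "D \<in> sl_q n q d" "qmat_elem n d D" "is_diag D"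
  using assms unfolding diag_sl_def sl_q_def by auto

lemma Hrho_diag_sl: "Hrho d \<in> diag_sl n q d"
  unfolding diag_sl_def using Hrho_sl tens_is_diag[OF hdot_hrho] by auto

lemma qmat_diag_part_diag_sl: "X \<in> sl_q n q d \<Longrightarrow> qmat_diag_part X \<in> diag_sl n q d"
  unfolding diag_sl_def by (simp add: qmat_diag_part_sl is_diag_qmat_diag_part)

lemma qsingle_lower_pair_lower_singles:
  assumes "X \<in> sl_q n q d" "p \<in> lower_pairs d"
  shows "qsingle (fst p) (snd p) (X (fst p) (snd p)) \<in> lower_singles n d"
  using assms qmat_elem_entry unfolding lower_singles_def lower_pairs_def sl_q_def by fastforce

lemma mbr_diag_lower_singles:
  assumes "D \<in> diag_sl n q d" "Y \<in> lower_singles n d"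
  shows "mbr n q d D Y \<in> lower_singles n d"
proof -
  obtain i j y where Y: "Y = qsingle i j y" "j < i" "i < d" "qt_elem n y"
    using assms(2) unfolding lower_singles_def by auto
  have "qt_elem n (\<lambda>c. qmult n q (D i i) y c - qmult n q y (D j j) c)"
    by (intro qt_elem_diff qt_elem_mult qmat_elem_entry[OF diag_slD(2)[OF assms(1)]] Y(4))
  then show ?thesis
    unfolding Y(1) mbr_diag_qsingle[OF diag_slD(3,2)[OF assms(1)]] lower_singles_def using Y(2,3) by blast
qed

lemma mdeg_lower_singles: "Y \<in> lower_singles n d \<Longrightarrow> mdeg k Y \<in> lower_singles n d"
  unfolding lower_singles_def by (fastforce simp: mdeg_qsingle intro: qt_elem_deg)

lemma mbr_Nplus_lower_single_sl:
  assumes "U \<in> Nplus_q n d" "Y \<in> lower_singles n d"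
  shows "mbr n q d U Y \<in> sl_q n q d"
  using assms unfolding lower_singles_def Nplus_q_def by (auto intro!: mbr_qsingle_sl)

locale sl_module =
  fixes n d :: nat and q :: "nat \<Rightarrow> nat \<Rightarrow> complex"
    and sc :: "complex \<Rightarrow> 'v::ab_group_add \<Rightarrow> 'v"
    and rho :: "qmat \<Rightarrow> 'v \<Rightarrow> 'v" and dl :: "nat \<Rightarrow> 'v \<Rightarrow> 'v"
  assumes q_admissible: "qparam n q" and module: "is_module n q d sc rho dl"
begin

sublocale V: vector_space sc
  using module unfolding is_module_def by blast

lemma rho_linear: "X \<in> sl_q n q d \<Longrightarrow> Vector_Spaces.linear sc sc (rho X)"
  using module unfolding is_module_def by blast

lemma rho_module_hom: "X \<in> sl_q n q d \<Longrightarrow> module_hom sc sc (rho X)"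
  by (simp add: module_hom_iff_linear rho_linear)

lemmas rho_add = module_hom.add[OF rho_module_hom]
  and rho_scale = module_hom.scale[OF rho_module_hom]
  and rho_zero = module_hom.zero[OF rho_module_hom]

lemma dl_module_hom: "i < n \<Longrightarrow> module_hom sc sc (dl i)"
  using module unfolding is_module_def by (simp add: module_hom_iff_linear)

lemmas dl_add = module_hom.add[OF dl_module_hom]
  and dl_scale = module_hom.scale[OF dl_module_hom]
  and dl_zero = module_hom.zero[OF dl_module_hom]

lemma rho_madd: "X \<in> sl_q n q d \<Longrightarrow> Y \<in> sl_q n q d \<Longrightarrow> rho (madd X Y) v = rho X v + rho Y v"
  using module unfolding is_module_def by blast

lemma rho_msc: "X \<in> sl_q n q d \<Longrightarrow> rho (msc z X) v = sc z (rho X v)"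
  using module unfolding is_module_def by blast

lemma rho_mbr:
  "X \<in> sl_q n q d \<Longrightarrow> Y \<in> sl_q n q d \<Longrightarrow> rho X (rho Y v) = rho Y (rho X v) + rho (mbr n q d X Y) v"
  using module unfolding is_module_def by (simp add: eq_diff_eq add.commute)

lemma dl_rho: "i < n \<Longrightarrow> X \<in> sl_q n q d \<Longrightarrow> dl i (rho X v) = rho X (dl i v) + rho (mdeg i X) v"
  using module unfolding is_module_def by (simp add: algebra_simps)

lemma rho_qmat_zero: "rho qmat_zero v = 0"
  using rho_msc[OF qmat_zero_sl, of 0 v] by (simp add: msc_zero)

lemma rho_qmat_restrict_lower:
  assumes "finite P" "P \<subseteq> lower_pairs d" "qmat_elem n d X"
  shows "rho (qmat_restrict P X) v = (\<Sum>p\<in>P. rho (qsingle (fst p) (snd p) (X (fst p) (snd p))) v)"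
  using assms(1,2)
proof (induction P rule: finite_induct)
  case empty
  then show ?case by (simp add: qmat_restrict_empty rho_qmat_zero)
next
  case (insert p P)
  have "snd p < fst p" "fst p < d" using insert.prems unfolding lower_pairs_def by auto
  then have "qsingle (fst p) (snd p) (X (fst p) (snd p)) \<in> sl_q n q d"
    by (intro qsingle_sl qmat_elem_entry[OF assms(3)]) auto
  moreover have "qmat_restrict P X \<in> sl_q n q d"
    using insert.prems assms(3) by (intro qmat_restrict_lower_sl) auto
  ultimately show ?case
    unfolding qmat_restrict_insert[OF insert.hyps(2)] using insert by (simp add: rho_madd)
qed

lemma rho_triangular_decomposition:
  assumes X: "X \<in> sl_q n q d"
  shows "rho X v = (\<Sum>p\<in>lower_pairs d. rho (qsingle (fst p) (snd p) (X (fst p) (snd p))) v)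
                   + rho (qmat_diag_part X) v + rho (qmat_upper_part X) v"
proof -
  let ?L = "qmat_restrict (lower_pairs d) X"
  have Xq: "qmat_elem n d X" using X unfolding sl_q_def by auto
  have L: "?L \<in> sl_q n q d" by (rule qmat_restrict_lower_sl[OF subset_refl Xq])
  have D: "qmat_diag_part X \<in> sl_q n q d" by (rule qmat_diag_part_sl[OF X])
  have U: "qmat_upper_part X \<in> sl_q n q d" by (rule Nplus_sl[OF qmat_upper_part_Nplus[OF Xq]])
  have "mtrace d (madd ?L (qmat_diag_part X)) = mtrace d X"
    unfolding mtrace_def madd_def qmat_restrict_def qmat_diag_part_def lower_pairs_def by simp
  moreover have "qmat_elem n d (madd ?L (qmat_diag_part X))"
    using L D unfolding sl_q_def qmat_elem_def madd_def by (auto intro: qt_elem_add)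
  ultimately have LD: "madd ?L (qmat_diag_part X) \<in> sl_q n q d"
    using X unfolding sl_q_def by simp
  have "rho X v = rho (madd (madd ?L (qmat_diag_part X)) (qmat_upper_part X)) v"
    using qmat_triangular_decomposition[OF Xq] by simp
  also have "\<dots> = rho ?L v + rho (qmat_diag_part X) v + rho (qmat_upper_part X) v"
    by (simp add: rho_madd[OF LD U] rho_madd[OF L D])
  finally show ?thesis
    by (simp add: rho_qmat_restrict_lower[OF finite_lower_pairs subset_refl Xq])
qed

lemma subspace_Vplus: "V.subspace (Vplus n d rho)"
  unfolding V.subspace_def Vplus_def using rho_zero rho_add rho_scale Nplus_sl by auto

lemma Vplus_diag_sl:
  assumes D: "D \<in> diag_sl n q d" and v: "v \<in> Vplus n d rho"
  shows "rho D v \<in> Vplus n d rho"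
  unfolding Vplus_def
proof (intro CollectI ballI)
  fix U assume U: "U \<in> Nplus_q n d"
  have "mbr n q d D U \<in> Nplus_q n d"
    using diag_slD[OF D] U by (intro mbr_diag_Nplus) auto
  then have "rho (mbr n q d D U) v = 0" "rho U v = 0"
    using v U unfolding Vplus_def by auto
  moreover have "rho D (rho U v) = rho U (rho D v) + rho (mbr n q d D U) v"
    by (rule rho_mbr[OF diag_slD(1)[OF D] Nplus_sl[OF U]])
  ultimately show "rho U (rho D v) = 0"
    using rho_zero[OF diag_slD(1)[OF D]] by simp
qed

lemma Vplus_dl:
  assumes i: "i < n" and v: "v \<in> Vplus n d rho"
  shows "dl i v \<in> Vplus n d rho"
  unfolding Vplus_def
proof (intro CollectI ballI)
  fix U assume U: "U \<in> Nplus_q n d"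
  have "rho (mdeg i U) v = 0" "rho U v = 0"
    using v U mdeg_Nplus[OF U] unfolding Vplus_def by auto
  moreover have "dl i (rho U v) = rho U (dl i v) + rho (mdeg i U) v"
    by (rule dl_rho[OF i Nplus_sl[OF U]])
  ultimately show "rho U (dl i v) = 0"
    using dl_zero[OF i] by simp
qed

lemma rho_tens_rad_diag_commute:
  assumes "hdot d h" "b \<in> rad n q" "D \<in> diag_sl n q d"
  shows "rho (tens h b) (rho D v) = rho D (rho (tens h b) v)"
  using rho_mbr[OF tens_rad_sl[OF assms(1,2)] diag_slD(1)[OF assms(3)]] rho_qmat_zero
    mbr_tens_rad_diag[OF q_admissible assms(2,1) diag_slD(3,2)[OF assms(3)]] by simp

end

section \<open>The submodule generated by a vector killed by N^+\<close>

context sl_module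
begin

inductive_set cartan_span :: "'v \<Rightarrow> 'v set" for x where
  base: "x \<in> cartan_span x"
| diag: "m \<in> cartan_span x \<Longrightarrow> D \<in> diag_sl n q d \<Longrightarrow> rho D m \<in> cartan_span x"
| deg: "m \<in> cartan_span x \<Longrightarrow> i < n \<Longrightarrow> dl i m \<in> cartan_span x"
| add: "m1 \<in> cartan_span x \<Longrightarrow> m2 \<in> cartan_span x \<Longrightarrow> m1 + m2 \<in> cartan_span x"
| scale: "m \<in> cartan_span x \<Longrightarrow> sc c m \<in> cartan_span x"

inductive_set lowered_span :: "'v \<Rightarrow> 'v set" for x where
  cartan: "m \<in> cartan_span x \<Longrightarrow> Y \<in> lower_singles n d \<Longrightarrow> rho Y m \<in> lowered_span x"
| lower: "r \<in> lowered_span x \<Longrightarrow> Y \<in> lower_singles n d \<Longrightarrow> rho Y r \<in> lowered_span x"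
| zero: "0 \<in> lowered_span x"
| add: "r1 \<in> lowered_span x \<Longrightarrow> r2 \<in> lowered_span x \<Longrightarrow> r1 + r2 \<in> lowered_span x"
| scale: "r \<in> lowered_span x \<Longrightarrow> sc c r \<in> lowered_span x"

text \<open>pbw_span x models U(N^-) U(diagonal + D) x, which by the PBW theorem is the submodule
  generated by x when N^+ kills x.\<close>
definition pbw_span :: "'v \<Rightarrow> 'v set" where
  "pbw_span x = {m + r | m r. m \<in> cartan_span x \<and> r \<in> lowered_span x}"

lemma cartan_span_minimal:
  assumes "V.subspace S" "x \<in> S"
    and "\<And>D v. D \<in> diag_sl n q d \<Longrightarrow> v \<in> S \<Longrightarrow> rho D v \<in> S"
    and "\<And>i v. i < n \<Longrightarrow> v \<in> S \<Longrightarrow> dl i v \<in> S"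
  shows "cartan_span x \<subseteq> S"
proof
  fix m assume "m \<in> cartan_span x"
  then show "m \<in> S"
    by induction (auto intro: assms(2-4) V.subspace_add[OF assms(1)] V.subspace_scale[OF assms(1)])
qed

lemma cartan_span_Vplus: "x \<in> Vplus n d rho \<Longrightarrow> cartan_span x \<subseteq> Vplus n d rho"
  by (intro cartan_span_minimal subspace_Vplus Vplus_diag_sl Vplus_dl)

text \<open>The hypothesis on \<gamma> covers the two cases needed: b = 0 (the grading element) and \<gamma> = 0
  (the kernel of h \<otimes> t^a).\<close>
lemma cartan_span_tens_eigenvector:
  assumes h: "hdot d h" and b: "b \<in> rad n q" and \<gamma>: "\<And>i. i < n \<Longrightarrow> \<gamma> * of_int (b i) = 0"
    and x: "rho (tens h b) x = sc \<gamma> x" and m: "m \<in> cartan_span x"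
  shows "rho (tens h b) m = sc \<gamma> m"
proof -
  let ?T = "tens h b"
  have T: "?T \<in> sl_q n q d" by (rule tens_rad_sl[OF h b])
  have "cartan_span x \<subseteq> {v. rho ?T v = sc \<gamma> v}"
  proof (rule cartan_span_minimal)
    show "V.subspace {v. rho ?T v = sc \<gamma> v}"
      by (rule V.subspace_eigenspace[OF rho_linear[OF T]])
    show "rho D v \<in> {v. rho ?T v = sc \<gamma> v}" if "D \<in> diag_sl n q d" "v \<in> {v. rho ?T v = sc \<gamma> v}" for D v
      using that rho_tens_rad_diag_commute[OF h b] rho_scale[OF diag_slD(1)] by simp
    show "dl i v \<in> {v. rho ?T v = sc \<gamma> v}" if i: "i < n" and v: "v \<in> {v. rho ?T v = sc \<gamma> v}" for i v
    proof -
      have "dl i (rho ?T v) = rho ?T (dl i v) + sc (of_int (b i)) (rho ?T v)"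
        using dl_rho[OF i T] rho_msc[OF T] by (simp add: mdeg_tens)
      moreover have "sc (of_int (b i)) (rho ?T v) = 0"
        using v \<gamma>[OF i] by (simp add: mult.commute)
      ultimately show ?thesis
        using v dl_scale[OF i] by simp
    qed
  qed (use x in simp)
  then show ?thesis using m by blast
qed

lemma cartan_span_zero: "0 \<in> cartan_span x"
  using cartan_span.scale[OF cartan_span.base, where c = 0] by simp

lemma lowered_span_sum:
  "finite P \<Longrightarrow> (\<And>p. p \<in> P \<Longrightarrow> f p \<in> lowered_span x) \<Longrightarrow> sum f P \<in> lowered_span x"
  by (induction P rule: finite_induct) (auto intro: lowered_span.zero lowered_span.add)

lemma lowered_span_diag_sl:
  "r \<in> lowered_span x \<Longrightarrow> D \<in> diag_sl n q d \<Longrightarrow> rho D r \<in> lowered_span x"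
proof (induction r rule: lowered_span.induct)
  case (cartan m Y)
  have "rho D (rho Y m) = rho Y (rho D m) + rho (mbr n q d D Y) m"
    by (rule rho_mbr[OF diag_slD(1)[OF cartan.prems] lower_singles_sl[OF cartan.hyps(2)]])
  moreover have "rho Y (rho D m) \<in> lowered_span x"
    by (intro lowered_span.cartan cartan_span.diag cartan.hyps cartan.prems)
  moreover have "rho (mbr n q d D Y) m \<in> lowered_span x"
    by (intro lowered_span.cartan cartan.hyps mbr_diag_lower_singles cartan.prems)
  ultimately show ?case by (simp add: lowered_span.add)
next
  case (lower r Y)
  have "rho D (rho Y r) = rho Y (rho D r) + rho (mbr n q d D Y) r"
    by (rule rho_mbr[OF diag_slD(1)[OF lower.prems] lower_singles_sl[OF lower.hyps(2)]])
  moreover have "rho Y (rho D r) \<in> lowered_span x"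
    using lower.IH[OF lower.prems] lower.hyps(2) by (rule lowered_span.lower)
  moreover have "rho (mbr n q d D Y) r \<in> lowered_span x"
    by (intro lowered_span.lower lower.hyps mbr_diag_lower_singles lower.prems)
  ultimately show ?case by (simp add: lowered_span.add)
qed (use rho_zero rho_add rho_scale diag_slD(1) in \<open>auto intro: lowered_span.intros\<close>)

lemma lowered_span_dl: "r \<in> lowered_span x \<Longrightarrow> i < n \<Longrightarrow> dl i r \<in> lowered_span x"
proof (induction r rule: lowered_span.induct)
  case (cartan m Y)
  have "dl i (rho Y m) = rho Y (dl i m) + rho (mdeg i Y) m"
    by (rule dl_rho[OF cartan.prems lower_singles_sl[OF cartan.hyps(2)]])
  moreover have "rho Y (dl i m) \<in> lowered_span x"
    by (intro lowered_span.cartan cartan_span.deg cartan.hyps cartan.prems)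
  moreover have "rho (mdeg i Y) m \<in> lowered_span x"
    by (intro lowered_span.cartan cartan.hyps mdeg_lower_singles)
  ultimately show ?case by (simp add: lowered_span.add)
next
  case (lower r Y)
  have "dl i (rho Y r) = rho Y (dl i r) + rho (mdeg i Y) r"
    by (rule dl_rho[OF lower.prems lower_singles_sl[OF lower.hyps(2)]])
  moreover have "rho Y (dl i r) \<in> lowered_span x"
    using lower.IH[OF lower.prems] lower.hyps(2) by (rule lowered_span.lower)
  moreover have "rho (mdeg i Y) r \<in> lowered_span x"
    by (intro lowered_span.lower lower.hyps mdeg_lower_singles)
  ultimately show ?case by (simp add: lowered_span.add)
qed (use dl_zero dl_add dl_scale in \<open>auto intro: lowered_span.intros\<close>)

lemma pbw_spanI: "m \<in> cartan_span x \<Longrightarrow> r \<in> lowered_span x \<Longrightarrow> m + r \<in> pbw_span x"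
  unfolding pbw_span_def by blast

lemma pbw_spanE:
  assumes "w \<in> pbw_span x"
  obtains m r where "w = m + r" "m \<in> cartan_span x" "r \<in> lowered_span x"
  using assms unfolding pbw_span_def by blast

lemma cartan_span_subset_pbw_span: "m \<in> cartan_span x \<Longrightarrow> m \<in> pbw_span x"
  using pbw_spanI[OF _ lowered_span.zero] by simp

lemma lowered_span_subset_pbw_span: "r \<in> lowered_span x \<Longrightarrow> r \<in> pbw_span x"
  using pbw_spanI[OF cartan_span_zero] by simp

lemma subspace_pbw_span: "V.subspace (pbw_span x)"
  unfolding V.subspace_def
proof (intro conjI ballI allI)
  show "0 \<in> pbw_span x"
    by (rule cartan_span_subset_pbw_span[OF cartan_span_zero])
  show "v + w \<in> pbw_span x" if v: "v \<in> pbw_span x" and w: "w \<in> pbw_span x" for v w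
  proof -
    obtain m1 r1 where "v = m1 + r1" "m1 \<in> cartan_span x" "r1 \<in> lowered_span x"
      using v by (rule pbw_spanE)
    moreover obtain m2 r2 where "w = m2 + r2" "m2 \<in> cartan_span x" "r2 \<in> lowered_span x"
      using w by (rule pbw_spanE)
    ultimately show ?thesis
      using pbw_spanI[OF cartan_span.add lowered_span.add] by (simp add: algebra_simps)
  qed
  show "sc c v \<in> pbw_span x" if "v \<in> pbw_span x" for c v
    using that by (auto elim!: pbw_spanE simp: V.scale_right_distrib
        intro!: pbw_spanI cartan_span.scale lowered_span.scale)
qed

lemma rho_lower_single_pbw_span:
  assumes "w \<in> pbw_span x" "Y \<in> lower_singles n d"
  shows "rho Y w \<in> lowered_span x"
  using assms(1)
proof (rule pbw_spanE)
  fix m r assume "w = m + r" "m \<in> cartan_span x" "r \<in> lowered_span x"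
  then show ?thesis
    using lowered_span.add[OF lowered_span.cartan lowered_span.lower] assms(2)
    by (simp add: rho_add[OF lower_singles_sl[OF assms(2)]])
qed

lemma rho_cartan_span_pbw_span:
  assumes m: "m \<in> cartan_span x" and x: "x \<in> Vplus n d rho" and X: "X \<in> sl_q n q d"
  shows "rho X m \<in> pbw_span x"
proof -
  have "(\<Sum>p\<in>lower_pairs d. rho (qsingle (fst p) (snd p) (X (fst p) (snd p))) m) \<in> lowered_span x"
    by (intro lowered_span_sum finite_lower_pairs lowered_span.cartan m qsingle_lower_pair_lower_singles[OF X])
  moreover have "rho (qmat_diag_part X) m \<in> cartan_span x"
    by (intro cartan_span.diag m qmat_diag_part_diag_sl X)
  moreover have "rho (qmat_upper_part X) m = 0"
    using cartan_span_Vplus[OF x] m qmat_upper_part_Nplus X unfolding Vplus_def sl_q_def by auto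
  ultimately show ?thesis
    unfolding rho_triangular_decomposition[OF X, of m] using pbw_spanI by (simp add: add.commute)
qed

lemma rho_lowered_span_pbw_span:
  assumes r: "r \<in> lowered_span x" and X: "X \<in> sl_q n q d"
    and upper: "\<And>U. U \<in> Nplus_q n d \<Longrightarrow> rho U r \<in> pbw_span x"
  shows "rho X r \<in> pbw_span x"
proof -
  have "(\<Sum>p\<in>lower_pairs d. rho (qsingle (fst p) (snd p) (X (fst p) (snd p))) r) \<in> lowered_span x"
    by (intro lowered_span_sum finite_lower_pairs lowered_span.lower r qsingle_lower_pair_lower_singles[OF X])
  moreover have "rho (qmat_diag_part X) r \<in> lowered_span x"
    by (intro lowered_span_diag_sl r qmat_diag_part_diag_sl X)
  ultimately have "(\<Sum>p\<in>lower_pairs d. rho (qsingle (fst p) (snd p) (X (fst p) (snd p))) r)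
      + rho (qmat_diag_part X) r \<in> pbw_span x"
    by (intro lowered_span_subset_pbw_span lowered_span.add)
  moreover have "rho (qmat_upper_part X) r \<in> pbw_span x"
    using upper qmat_upper_part_Nplus X unfolding sl_q_def by auto
  ultimately show ?thesis
    unfolding rho_triangular_decomposition[OF X, of r] by (rule V.subspace_add[OF subspace_pbw_span])
qed

text \<open>Commuting U \<in> N^+ past a lowering operator Y leaves the bracket [U, Y] \<in> sl_d(C_q), which
  the two previous lemmas handle.\<close>
lemma Nplus_lowered_span_pbw_span:
  assumes "r \<in> lowered_span x" "x \<in> Vplus n d rho" "U \<in> Nplus_q n d"
  shows "rho U r \<in> pbw_span x"
  using assms
proof (induction r arbitrary: U rule: lowered_span.induct)
  case (cartan m Y)
  have "rho U (rho Y m) = rho Y (rho U m) + rho (mbr n q d U Y) m"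
    by (rule rho_mbr[OF Nplus_sl[OF cartan.prems(2)] lower_singles_sl[OF cartan.hyps(2)]])
  moreover have "rho U m = 0"
    using cartan_span_Vplus[OF cartan.prems(1)] cartan.hyps(1) cartan.prems(2) unfolding Vplus_def by auto
  moreover have "rho (mbr n q d U Y) m \<in> pbw_span x"
    by (intro rho_cartan_span_pbw_span cartan.hyps cartan.prems mbr_Nplus_lower_single_sl)
  ultimately show ?case
    using rho_zero[OF lower_singles_sl[OF cartan.hyps(2)]] by simp
next
  case (lower r Y)
  have "rho U (rho Y r) = rho Y (rho U r) + rho (mbr n q d U Y) r"
    by (rule rho_mbr[OF Nplus_sl[OF lower.prems(2)] lower_singles_sl[OF lower.hyps(2)]])
  moreover have "rho Y (rho U r) \<in> pbw_span x"
    using rho_lower_single_pbw_span[OF lower.IH[OF lower.prems] lower.hyps(2)]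
    by (rule lowered_span_subset_pbw_span)
  moreover have "rho (mbr n q d U Y) r \<in> pbw_span x"
    using lower.hyps(1) mbr_Nplus_lower_single_sl[OF lower.prems(2) lower.hyps(2)] lower.IH[OF lower.prems(1)]
    by (rule rho_lowered_span_pbw_span)
  ultimately show ?case
    by (simp add: V.subspace_add[OF subspace_pbw_span])
qed (use rho_zero rho_add rho_scale Nplus_sl subspace_pbw_span in
     \<open>auto intro: V.subspace_0 V.subspace_add V.subspace_scale\<close>)

lemma pbw_span_invariant:
  assumes "w \<in> pbw_span x" "x \<in> Vplus n d rho" "X \<in> sl_q n q d"
  shows "rho X w \<in> pbw_span x"
  using assms(1)
proof (rule pbw_spanE)
  fix m r assume "w = m + r" "m \<in> cartan_span x" "r \<in> lowered_span x"
  then show ?thesis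
    using rho_cartan_span_pbw_span[OF _ assms(2,3)] rho_lowered_span_pbw_span[OF _ assms(3)]
      Nplus_lowered_span_pbw_span[OF _ assms(2)]
    by (simp add: rho_add[OF assms(3)] V.subspace_add[OF subspace_pbw_span])
qed

lemma pbw_span_dl: "w \<in> pbw_span x \<Longrightarrow> i < n \<Longrightarrow> dl i w \<in> pbw_span x"
  by (auto elim!: pbw_spanE simp: dl_add
      intro!: pbw_spanI cartan_span.deg lowered_span_dl)

end

locale irreducible_sl_module = sl_module +
  assumes irreducible: "irreducible_mod n q d sc rho dl"
begin

lemma pbw_span_eq_UNIV:
  assumes "x \<in> Vplus n d rho" "x \<noteq> 0"
  shows "pbw_span x = UNIV"
proof -
  have "pbw_span x = {0} \<or> pbw_span x = UNIV"
    using irreducible subspace_pbw_span pbw_span_invariant[OF _ assms(1)] pbw_span_dl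
    unfolding irreducible_mod_def by blast
  moreover have "x \<in> pbw_span x"
    by (rule cartan_span_subset_pbw_span[OF cartan_span.base])
  ultimately show ?thesis using assms(2) by auto
qed

end

section \<open>Eigenvalues of the grading element\<close>

context sl_module
begin

lemma rho_lower_single_Hrho_eigenspaces:
  assumes Y: "Y \<in> lower_singles n d" and v: "rho (Hrho d) v = sc \<gamma> v"
  shows "rho Y v \<in> eigenspaces sc (rho (Hrho d)) {\<mu>. Re \<mu> < Re \<gamma>}"
proof -
  obtain i j y where ijy: "Y = qsingle i j y" "j < i" "i < d" "qt_elem n y"
    using Y unfolding lower_singles_def by auto
  define \<delta> :: complex where "\<delta> = 2 * (of_nat j - of_nat i)"
  have Ysl: "Y \<in> sl_q n q d" by (rule lower_singles_sl[OF Y])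
  have "rho (Hrho d) (rho Y v) = rho Y (rho (Hrho d) v) + rho (mbr n q d (Hrho d) Y) v"
    by (rule rho_mbr[OF Hrho_sl Ysl])
  also have "\<dots> = sc (\<gamma> + \<delta>) (rho Y v)"
    using ijy Ysl unfolding v \<delta>_def
    by (simp add: mbr_Hrho_qsingle rho_msc rho_scale V.scale_left_distrib)
  finally show ?thesis
    unfolding eigenspaces_def \<delta>_def using ijy(2) by force
qed

lemma lowered_span_Hrho_eigenspaces:
  assumes x: "rho (Hrho d) x = sc \<gamma> x" and r: "r \<in> lowered_span x"
  shows "r \<in> V.span (eigenspaces sc (rho (Hrho d)) {\<mu>. Re \<mu> < Re \<gamma>})"
  using r
proof induction
  case (cartan m Y)
  have "rho (Hrho d) m = sc \<gamma> m"
    by (rule cartan_span_tens_eigenvector[OF hdot_hrho zero_in_rad _ x cartan.hyps(1)]) simp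
  then show ?case
    by (intro V.span_base rho_lower_single_Hrho_eigenspaces cartan.hyps(2))
next
  case (lower r Y)
  have Y_span: "rho Y e \<in> V.span (eigenspaces sc (rho (Hrho d)) {\<mu>. Re \<mu> < Re \<gamma>})"
    if e: "e \<in> eigenspaces sc (rho (Hrho d)) {\<mu>. Re \<mu> < Re \<gamma>}" for e
  proof -
    obtain \<mu> where \<mu>: "Re \<mu> < Re \<gamma>" "rho (Hrho d) e = sc \<mu> e"
      using e unfolding eigenspaces_def by auto
    have "rho Y e \<in> eigenspaces sc (rho (Hrho d)) {\<nu>. Re \<nu> < Re \<mu>}"
      by (rule rho_lower_single_Hrho_eigenspaces[OF lower.hyps(2) \<mu>(2)])
    also have "\<dots> \<subseteq> eigenspaces sc (rho (Hrho d)) {\<mu>. Re \<mu> < Re \<gamma>}"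
      using \<mu>(1) by (intro eigenspaces_mono) auto
    finally show ?thesis by (rule V.span_base)
  qed
  show ?case
    by (rule V.linear_maps_span_into_span[OF rho_linear[OF lower_singles_sl[OF lower.hyps(2)]] Y_span lower.IH])
next
  case zero
  then show ?case by (rule V.span_zero)
next
  case (add r1 r2)
  then show ?case by (simp add: V.span_add)
next
  case (scale r c)
  then show ?case by (simp add: V.span_scale)
qed

lemma span_Hrho_eigenspaces:
  assumes "integrable_fd n d sc rho dl"
  shows "V.span (eigenspaces sc (rho (Hrho d)) UNIV) = UNIV"
proof -
  have "\<Union>{wspace n d sc rho dl lam mu | lam mu. True} \<subseteq> eigenspaces sc (rho (Hrho d)) UNIV"
    unfolding eigenspaces_def wspace_def using hdot_hrho by blast
  then have "V.span (\<Union>{wspace n d sc rho dl lam mu | lam mu. True}) \<subseteq> V.span (eigenspaces sc (rho (Hrho d)) UNIV)"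
    by (rule V.span_mono)
  then show ?thesis
    using assms unfolding integrable_fd_def by blast
qed

lemma Vplus_kernel_tens_rad_subspace:
  assumes "hdot d h" "a \<in> rad n q"
  shows "V.subspace (Vplus n d rho \<inter> {v. rho (tens h a) v = 0})"
  by (intro V.subspace_inter subspace_Vplus module_hom.subspace_kernel[OF rho_module_hom] tens_rad_sl assms)

lemma Hrho_image_Vplus: "rho (Hrho d) ` Vplus n d rho \<subseteq> Vplus n d rho"
  using Vplus_diag_sl[OF Hrho_diag_sl] by blast

lemma Hrho_image_Vplus_kernel_tens_rad:
  assumes "hdot d h" "a \<in> rad n q"
  shows "rho (Hrho d) ` (Vplus n d rho \<inter> {v. rho (tens h a) v = 0}) \<subseteq> Vplus n d rho \<inter> {v. rho (tens h a) v = 0}"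
  using Vplus_diag_sl[OF Hrho_diag_sl] rho_tens_rad_diag_commute[OF assms Hrho_diag_sl] rho_zero[OF Hrho_sl]
  by auto

end

context irreducible_sl_module
begin

lemma Hrho_eigenvalue_cases:
  assumes x: "x \<in> Vplus n d rho" "x \<noteq> 0" "rho (Hrho d) x = sc \<gamma> x"
    and y: "y \<noteq> 0" "rho (Hrho d) y = sc \<mu> y"
  shows "(\<mu> = \<gamma> \<and> y \<in> cartan_span x) \<or> Re \<mu> < Re \<gamma>"
proof -
  let ?E = "eigenspaces sc (rho (Hrho d))"
  have H: "Vector_Spaces.linear sc sc (rho (Hrho d))" by (rule rho_linear[OF Hrho_sl])
  have "y \<in> pbw_span x" using pbw_span_eq_UNIV[OF x(1,2)] by simp
  then obtain m r where y_eq: "y = m + r" and m: "m \<in> cartan_span x" and r: "r \<in> lowered_span x"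
    by (rule pbw_spanE)
  have Hm: "rho (Hrho d) m = sc \<gamma> m"
    by (rule cartan_span_tens_eigenvector[OF hdot_hrho zero_in_rad _ x(3) m]) simp
  have r_span: "r \<in> V.span (?E {\<nu>. Re \<nu> < Re \<gamma>})"
    by (rule lowered_span_Hrho_eigenspaces[OF x(3) r])
  show ?thesis
  proof (cases "\<mu> = \<gamma>")
    case True
    have "rho (Hrho d) r = sc \<gamma> r"
      using y(2) Hm True unfolding y_eq by (simp add: rho_add[OF Hrho_sl] V.scale_right_distrib)
    then have "r = 0"
      using V.eigenvector_in_span_other_eigenspaces_eq_0[OF H r_span, of \<gamma>] by simp
    then show ?thesis using True y_eq m by simp
  next
    case False
    have "m \<in> V.span (?E (insert \<gamma> {\<nu>. Re \<nu> < Re \<gamma>}))"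
      using Hm unfolding eigenspaces_def by (intro V.span_base) auto
    moreover have "r \<in> V.span (?E (insert \<gamma> {\<nu>. Re \<nu> < Re \<gamma>}))"
      by (rule subsetD[OF V.span_mono[OF eigenspaces_mono[OF subset_insertI]] r_span])
    ultimately have y_span: "y \<in> V.span (?E (insert \<gamma> {\<nu>. Re \<nu> < Re \<gamma>}))"
      unfolding y_eq by (rule V.span_add)
    have "\<mu> \<in> insert \<gamma> {\<nu>. Re \<nu> < Re \<gamma>}"
    proof (rule ccontr)
      assume "\<mu> \<notin> insert \<gamma> {\<nu>. Re \<nu> < Re \<gamma>}"
      with y_span have "y = 0"
        using y(2) by (rule V.eigenvector_in_span_other_eigenspaces_eq_0[OF H])
      with y(1) show False ..
    qed
    then show ?thesis using False by simp
  qed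
qed

end

theorem lemma5p12:
  fixes n d :: nat
    and q :: "nat \<Rightarrow> nat \<Rightarrow> complex"
    and sc :: "complex \<Rightarrow> 'v::ab_group_add \<Rightarrow> 'v"
    and rho :: "qmat \<Rightarrow> 'v \<Rightarrow> 'v"
    and dl :: "nat \<Rightarrow> 'v \<Rightarrow> 'v"
    and h :: "nat \<Rightarrow> nat \<Rightarrow> complex"
    and a :: lat
  assumes "2 \<le> n" and "2 \<le> d"
    and "qparam n q"
    and "is_module n q d sc rho dl"
    and "irreducible_mod n q d sc rho dl"
    and "integrable_fd n d sc rho dl"
    and "hdot d h"
    and "a \<in> rad n q"
    and "\<exists>v\<in>Vplus n d rho. rho (tens h a) v \<noteq> 0"
  shows "\<forall>w\<in>Vplus n d rho. w \<noteq> 0 \<longrightarrow> rho (tens h a) w \<noteq> 0"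
proof (intro ballI impI notI)
  interpret irreducible_sl_module n d q sc rho dl
    by unfold_locales (fact assms)+
  let ?T = "tens h a" and ?H = "rho (Hrho d)" and ?K = "Vplus n d rho \<inter> {v. rho (tens h a) v = 0}"
  have T: "?T \<in> sl_q n q d" by (rule tens_rad_sl[OF assms(7,8)])
  note eigenvector_exists = V.invariant_subspace_eigenvector_not_in_kernel[OF rho_linear[OF Hrho_sl]
      span_Hrho_eigenspaces[OF assms(6)]]
  obtain v where "v \<in> Vplus n d rho" "rho ?T v \<noteq> 0" using assms(9) ..
  then obtain u \<alpha> where u: "u \<in> Vplus n d rho" "?H u = sc \<alpha> u" "rho ?T u \<noteq> 0"
    by (rule eigenvector_exists[OF subspace_Vplus Hrho_image_Vplus rho_linear[OF T]])
  have u0: "u \<noteq> 0" using u(3) rho_zero[OF T] by auto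
  fix w assume "w \<in> Vplus n d rho" "w \<noteq> 0" "rho ?T w = 0"
  then have "w \<in> ?K" "id w \<noteq> 0" by simp_all
  then obtain w' \<beta> where w': "w' \<in> ?K" "?H w' = sc \<beta> w'" "id w' \<noteq> 0"
    by (rule eigenvector_exists[OF Vplus_kernel_tens_rad_subspace[OF assms(7,8)]
        Hrho_image_Vplus_kernel_tens_rad[OF assms(7,8)] V.linear_id])
  have w'0: "w' \<noteq> 0" and w'_Vplus: "w' \<in> Vplus n d rho" using w'(1,3) by simp_all
  have "(\<alpha> = \<beta> \<and> u \<in> cartan_span w') \<or> Re \<alpha> < Re \<beta>"
    by (rule Hrho_eigenvalue_cases[OF w'_Vplus w'0 w'(2) u0 u(2)])
  moreover have "(\<beta> = \<alpha> \<and> w' \<in> cartan_span u) \<or> Re \<beta> < Re \<alpha>"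
    by (rule Hrho_eigenvalue_cases[OF u(1) u0 u(2) w'0 w'(2)])
  ultimately have u_cartan: "u \<in> cartan_span w'" by auto
  have Tw': "rho ?T w' = sc 0 w'" using w'(1) by simp
  have "rho ?T u = sc 0 u"
    by (rule cartan_span_tens_eigenvector[OF assms(7,8) _ Tw' u_cartan]) simp
  with u(3) show False by simp
qed

end
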